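(* Let $K$ be a clique simplicial complex, $X\cup Y=K_0$ a cover of its vertex set, $A:=X\cap Y$, and $P:=\{\sigma\in K\mid\sigma\subset X\text{ or }\sigma\subset Y\text{ or }\sigma\cap A\neq\emptyset\}$. Assume there are two elements $a_X,a_Y\in A$ such that: (i) for every edge $\tau\in K_1$ with $|\tau\cap A|=1$ and $|\tau\cap(X\setminus A)|=1$, the set $\tau\cup\{a_X\}$ is a simplex of $K$; (ii) for every edge $\tau\in K_1$ with $|\tau\cap A|=1$ and $|\tau\cap(Y\setminus A)|=1$, the set $\tau\cup\{a_Y\}$ is a simplex of $K$; (iii) for every edge $\tau\in K_1\setminus P$, the set $\tau\cup\{a_X,a_Y\}$ is a simplex of $K$. Then for every $\sigma\in K\setminus P$, the set $\{a_X,a_Y\}$ is a central simplex of $\mathrm{St}(\sigma,A)$, and the inclusion $K_X\cup K_Y\subset K$ is a weak equivalence.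
   Context: A simplicial complex is a collection of finite nonempty subsets of a fixed set closed under taking nonempty subsets; $K_0$ is its vertex set, $K_1$ its set of edges, $K_B$ the subcomplex of simplices contained in $B$. $K$ is clique if a set with at least two elements is a simplex iff all its two-element subsets are simplices. $\mathrm{St}(\sigma,A):=\{\mu\subset A\mid 0<|\mu|<\infty,\ \mu\cup\sigma\in K\}$. A simplex $\tau$ of a complex $L$ is central if $\sigma\cup\tau\in L$ for every simplex $\sigma$ of $L$. Homotopical notions refer to geometric realizations. *)

theory Defs
  imports "HOL-Analysis.Analysis"
begin

definition simplicial_complex :: "'a set set \<Rightarrow> bool" where
  "simplicial_complex K \<longleftrightarrow>
     (\<forall>\<sigma>\<in>K. finite \<sigma> \<and> \<sigma> \<noteq> {}) \<and>
     (\<forall>\<sigma>\<in>K. \<forall>\<tau>. \<tau> \<subseteq> \<sigma> \<and> \<tau> \<noteq> {} \<longrightarrow> \<tau> \<in> K)"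

definition vertices :: "'a set set \<Rightarrow> 'a set" where
  "vertices K = {v. {v} \<in> K}"

definition edges :: "'a set set \<Rightarrow> 'a set set" where
  "edges K = {\<sigma>\<in>K. card \<sigma> = 2}"

definition full_sub :: "'a set set \<Rightarrow> 'a set \<Rightarrow> 'a set set" where
  "full_sub K B = {\<sigma>\<in>K. \<sigma> \<subseteq> B}"

definition clique_complex :: "'a set set \<Rightarrow> bool" where
  "clique_complex K \<longleftrightarrow>
     (\<forall>\<sigma>. finite \<sigma> \<and> 2 \<le> card \<sigma> \<longrightarrow>
        (\<sigma> \<in> K \<longleftrightarrow> (\<forall>e. e \<subseteq> \<sigma> \<and> card e = 2 \<longrightarrow> e \<in> K)))"

definition St :: "'a set set \<Rightarrow> 'a set \<Rightarrow> 'a set \<Rightarrow> 'a set set" where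
  "St K \<sigma> A = {\<mu>. \<mu> \<subseteq> A \<and> finite \<mu> \<and> \<mu> \<noteq> {} \<and> \<mu> \<union> \<sigma> \<in> K}"

definition central_simplex :: "'a set set \<Rightarrow> 'a set \<Rightarrow> bool" where
  "central_simplex L \<tau> \<longleftrightarrow> \<tau> \<in> L \<and> (\<forall>\<sigma>\<in>L. \<sigma> \<union> \<tau> \<in> L)"

text \<open>Points: finitely supported barycentric coordinate functions whose support is a simplex.\<close>
definition realization_carrier :: "'a set set \<Rightarrow> ('a \<Rightarrow> real) set" where
  "realization_carrier K =
     {f. {v. f v \<noteq> 0} \<in> K \<and> (\<forall>v. 0 \<le> f v) \<and> sum f {v. f v \<noteq> 0} = 1}"

definition closed_simplex :: "'a set \<Rightarrow> ('a \<Rightarrow> real) set" where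
  "closed_simplex \<sigma> = {f. (\<forall>v. 0 \<le> f v) \<and> (\<forall>v. v \<notin> \<sigma> \<longrightarrow> f v = 0) \<and> sum f \<sigma> = 1}"

definition geometric_realization :: "'a set set \<Rightarrow> ('a \<Rightarrow> real) topology" where
  "geometric_realization K = topology (\<lambda>U. U \<subseteq> realization_carrier K \<and>
      (\<forall>\<sigma>\<in>K. openin (subtopology (powertop_real UNIV) (closed_simplex \<sigma>))
                    (U \<inter> closed_simplex \<sigma>)))"

definition sphere_base :: "nat \<Rightarrow> real" where
  "sphere_base = (\<lambda>i. if i = 0 then 1 else 0)"

text \<open>f induces a bijection on path components and, for every base point x and n \<ge> 1,
a bijection pi_n(X,x) \<rightarrow> pi_n(Y,f x) (pointed homotopy classes of maps from the n-sphere).\<close>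
definition weak_homotopy_equivalence ::
    "'a topology \<Rightarrow> 'b topology \<Rightarrow> ('a \<Rightarrow> 'b) \<Rightarrow> bool" where
  "weak_homotopy_equivalence X Y f \<longleftrightarrow>
     continuous_map X Y f \<and>
     (\<forall>y\<in>topspace Y. \<exists>x\<in>topspace X. path_component_of Y (f x) y) \<and>
     (\<forall>x1\<in>topspace X. \<forall>x2\<in>topspace X.
         path_component_of Y (f x1) (f x2) \<longrightarrow> path_component_of X x1 x2) \<and>
     (\<forall>n\<ge>1. \<forall>x\<in>topspace X.
        (\<forall>g. continuous_map (nsphere n) Y g \<and> g sphere_base = f x \<longrightarrow>
           (\<exists>h. continuous_map (nsphere n) X h \<and> h sphere_base = x \<and>
                homotopic_with (\<lambda>k. k sphere_base = f x) (nsphere n) Y (f \<circ> h) g)) \<and>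
        (\<forall>h1 h2. continuous_map (nsphere n) X h1 \<and> h1 sphere_base = x \<and>
                 continuous_map (nsphere n) X h2 \<and> h2 sphere_base = x \<and>
                 homotopic_with (\<lambda>k. k sphere_base = f x) (nsphere n) Y (f \<circ> h1) (f \<circ> h2)
                 \<longrightarrow> homotopic_with (\<lambda>k. k sphere_base = x) (nsphere n) X h1 h2))"

end

theory Submission
  imports Defs
begin

text \<open>
  A point f of the realization of K is a barycentric coordinate function. Let m be the
  smaller of the masses that f puts on X - Y and on Y - X. Moving mass m proportionally
  from X - Y onto aX and from Y - X onto aY empties one of the two sides, so the result
  lies in the realization of the full subcomplexes on X and Y. It is still a point of the
  realization of K: when m > 0 the support of f meets both X - Y and Y - X, and the clique
  condition together with (i)-(iii) shows that such a simplex spans a simplex with aX and aY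
  (the same fact makes {aX, aY} central in St(sigma, A)). The straight-line homotopy from f
  to its image is a deformation retraction that fixes the subcomplex pointwise, so the
  inclusion is a weak homotopy equivalence.
\<close>

section \<open>Simplicial and clique complexes\<close>

lemma simplicial_complex_subset:
  "simplicial_complex K \<Longrightarrow> \<sigma> \<in> K \<Longrightarrow> \<tau> \<subseteq> \<sigma> \<Longrightarrow> \<tau> \<noteq> {} \<Longrightarrow> \<tau> \<in> K"
  unfolding simplicial_complex_def by blast

lemma simplicial_complex_finite: "simplicial_complex K \<Longrightarrow> \<sigma> \<in> K \<Longrightarrow> finite \<sigma>"
  unfolding simplicial_complex_def by blast

lemma simplex_subset_vertices: "simplicial_complex K \<Longrightarrow> \<sigma> \<in> K \<Longrightarrow> \<sigma> \<subseteq> vertices K"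
  using simplicial_complex_subset[of K \<sigma> "{_}"] unfolding vertices_def by blast

lemma simplicial_complex_full_sub:
  "simplicial_complex K \<Longrightarrow> simplicial_complex (full_sub K B)"
  unfolding simplicial_complex_def full_sub_def
  by (metis (no_types, lifting) mem_Collect_eq subset_trans)

lemma simplicial_complex_Un:
  "simplicial_complex K \<Longrightarrow> simplicial_complex L \<Longrightarrow> simplicial_complex (K \<union> L)"
  unfolding simplicial_complex_def by (metis Un_iff)

lemma clique_complex_memI:
  assumes K: "simplicial_complex K" and cl: "clique_complex K"
    and "finite \<rho>" "\<rho> \<noteq> {}" and pairs: "\<And>u w. u \<in> \<rho> \<Longrightarrow> w \<in> \<rho> \<Longrightarrow> {u, w} \<in> K"
  shows "\<rho> \<in> K"
proof (cases "2 \<le> card \<rho>")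
  case True
  have "e \<in> K" if "e \<subseteq> \<rho>" "card e = 2" for e
    using that pairs by (metis card_2_iff insert_subset)
  then show ?thesis
    using cl True \<open>finite \<rho>\<close> unfolding clique_complex_def by blast
next
  case False
  moreover have "0 < card \<rho>"
    using \<open>finite \<rho>\<close> \<open>\<rho> \<noteq> {}\<close> card_gt_0_iff by blast
  ultimately have "card \<rho> = 1"
    by linarith
  then obtain u where "\<rho> = {u}"
    by (rule card_1_singletonE)
  then show ?thesis
    using pairs[of u u] by simp
qed

lemma clique_complex_Un_apexes:
  assumes K: "simplicial_complex K" and cl: "clique_complex K"
    and cover: "vertices K \<subseteq> X \<union> Y"
    and edge_X: "\<And>u x. u \<in> X \<inter> Y \<Longrightarrow> x \<in> X - Y \<Longrightarrow> {u, x} \<in> K \<Longrightarrow> {u, x} \<union> {aX} \<in> K"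
    and edge_Y: "\<And>u y. u \<in> X \<inter> Y \<Longrightarrow> y \<in> Y - X \<Longrightarrow> {u, y} \<in> K \<Longrightarrow> {u, y} \<union> {aY} \<in> K"
    and edge_XY: "\<And>x y. x \<in> X - Y \<Longrightarrow> y \<in> Y - X \<Longrightarrow> {x, y} \<in> K \<Longrightarrow> {x, y} \<union> {aX, aY} \<in> K"
    and \<sigma>: "\<sigma> \<in> K" and x: "x \<in> \<sigma>" "x \<in> X - Y" and y: "y \<in> \<sigma>" "y \<in> Y - X"
  shows "\<sigma> \<union> {aX, aY} \<in> K"
proof (rule clique_complex_memI[OF K cl])
  note face = simplicial_complex_subset[OF K]
  have in_\<sigma>: "{u, w} \<in> K" if "u \<in> \<sigma>" "w \<in> \<sigma>" for u w
    using face[OF \<sigma>] that by simp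
  have xy: "{x, y} \<union> {aX, aY} \<in> K"
    using edge_XY x y in_\<sigma> by blast
  have apex: "{u, aX} \<in> K \<and> {u, aY} \<in> K" if u: "u \<in> \<sigma>" for u
  proof -
    have "u \<in> X \<union> Y"
      using simplex_subset_vertices[OF K \<sigma>] cover u by blast
    then consider "u \<in> X - Y" | "u \<in> Y - X" | "u \<in> X \<inter> Y"
      by blast
    then show ?thesis
    proof cases
      case 1
      then have "{u, y} \<union> {aX, aY} \<in> K" using edge_XY y in_\<sigma> u by blast
      from face[OF this] show ?thesis by auto
    next
      case 2
      then have "{x, u} \<union> {aX, aY} \<in> K" using edge_XY x in_\<sigma> u by blast
      from face[OF this] show ?thesis by auto
    next
      case 3
      then have "{u, x} \<union> {aX} \<in> K" "{u, y} \<union> {aY} \<in> K"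
        using edge_X edge_Y x y in_\<sigma> u by blast+
      from face[OF this(1)] face[OF this(2)] show ?thesis by auto
    qed
  qed
  show "{u, w} \<in> K" if "u \<in> \<sigma> \<union> {aX, aY}" "w \<in> \<sigma> \<union> {aX, aY}" for u w
  proof (cases "u \<in> \<sigma>")
    case True
    then show ?thesis using that apex in_\<sigma> by blast
  next
    case False
    then have u: "u \<in> {aX, aY}" using that by blast
    show ?thesis
    proof (cases "w \<in> \<sigma>")
      case True
      then show ?thesis using apex[OF True] u by (auto simp: insert_commute)
    next
      case False
      then have "{u, w} \<subseteq> {x, y} \<union> {aX, aY}" using that u by blast
      then show ?thesis using face[OF xy] by blast
    qed
  qed
  show "finite (\<sigma> \<union> {aX, aY})"
    using simplicial_complex_finite[OF K \<sigma>] by simp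
qed simp

section \<open>Geometric realizations\<close>

abbreviation simplex_topology :: "'a set \<Rightarrow> ('a \<Rightarrow> real) topology" where
  "simplex_topology \<sigma> \<equiv> subtopology (powertop_real UNIV) (closed_simplex \<sigma>)"

lemma closed_simplexD:
  assumes "f \<in> closed_simplex \<sigma>"
  shows "0 \<le> f v" and "v \<notin> \<sigma> \<Longrightarrow> f v = 0" and "sum f \<sigma> = 1"
    and "{v. f v \<noteq> 0} \<subseteq> \<sigma>"
  using assms unfolding closed_simplex_def by auto

lemma closed_simplex_mono:
  assumes "f \<in> closed_simplex \<sigma>" "\<sigma> \<subseteq> \<tau>" "finite \<tau>"
  shows "f \<in> closed_simplex \<tau>"
proof -
  have "sum f \<sigma> = sum f \<tau>"
    by (rule sum.mono_neutral_left) (use assms closed_simplexD in auto)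
  then show ?thesis using assms unfolding closed_simplex_def by auto
qed

lemma closed_simplex_convex:
  assumes "f \<in> closed_simplex \<tau>" "g \<in> closed_simplex \<tau>" "t \<in> {0..1::real}"
  shows "(\<lambda>v. f v + t * (g v - f v)) \<in> closed_simplex \<tau>"
proof -
  have "0 \<le> (1 - t) * f v + t * g v" for v
    using assms(3) closed_simplexD(1)[OF assms(1), of v] closed_simplexD(1)[OF assms(2), of v]
    by (simp add: add_nonneg_nonneg)
  then have "0 \<le> f v + t * (g v - f v)" for v
    by (simp add: algebra_simps)
  moreover have "sum (\<lambda>v. f v + t * (g v - f v)) \<tau> = sum f \<tau> + t * (sum g \<tau> - sum f \<tau>)"
    by (simp add: sum.distrib sum_subtractf sum_distrib_left[symmetric])
  ultimately show ?thesis
    using closed_simplexD[OF assms(1)] closed_simplexD[OF assms(2)]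
    unfolding closed_simplex_def by auto
qed

lemma closed_simplex_subset_realization_carrier:
  assumes K: "simplicial_complex K" and "\<sigma> \<in> K"
  shows "closed_simplex \<sigma> \<subseteq> realization_carrier K"
proof
  fix f assume f: "f \<in> closed_simplex \<sigma>"
  have "finite \<sigma>" using simplicial_complex_finite assms by blast
  then have "sum f \<sigma> = sum f {v. f v \<noteq> 0}"
    by (rule sum.mono_neutral_right) (use closed_simplexD(4)[OF f] in auto)
  then have sum_support: "sum f {v. f v \<noteq> 0} = 1"
    using closed_simplexD(3)[OF f] by simp
  then have "{v. f v \<noteq> 0} \<noteq> {}" by (metis sum.empty zero_neq_one)
  then have "{v. f v \<noteq> 0} \<in> K"
    using simplicial_complex_subset[OF assms closed_simplexD(4)[OF f]] by blast
  then show "f \<in> realization_carrier K"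
    using sum_support closed_simplexD(1)[OF f] unfolding realization_carrier_def by auto
qed

lemma realization_carrierD:
  assumes "f \<in> realization_carrier K"
  shows "{v. f v \<noteq> 0} \<in> K" and "f \<in> closed_simplex {v. f v \<noteq> 0}"
  using assms unfolding realization_carrier_def closed_simplex_def by auto

lemma realization_carrier_mono: "L \<subseteq> K \<Longrightarrow> realization_carrier L \<subseteq> realization_carrier K"
  unfolding realization_carrier_def by blast

lemma continuous_map_coordinate: "continuous_map (simplex_topology \<sigma>) euclideanreal (\<lambda>f. f v)"
  by (rule continuous_map_from_subtopology, rule continuous_map_product_projection) simp

lemma closedin_closed_simplex:
  assumes "finite \<sigma>"
  shows "closedin (powertop_real UNIV) (closed_simplex \<sigma>)"
proof -
  have coordinate: "continuous_map (powertop_real UNIV) euclideanreal (\<lambda>f. f v)" for v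
    by (rule continuous_map_product_projection) simp
  have sum: "continuous_map (powertop_real UNIV) euclideanreal (\<lambda>f. sum f \<sigma>)"
    using assms by (intro continuous_map_sum coordinate)
  have "closed_simplex \<sigma> =
      (\<Inter>v. {f \<in> topspace (powertop_real UNIV). f v \<in> (if v \<in> \<sigma> then {0..} else {0})})
      \<inter> {f \<in> topspace (powertop_real UNIV). sum f \<sigma> \<in> {1}}"
    unfolding closed_simplex_def by (auto split: if_splits) (metis order_refl)
  also have "closedin (powertop_real UNIV) \<dots>"
  proof (intro closedin_Int closedin_Inter)
    show "closedin (powertop_real UNIV) {f \<in> topspace (powertop_real UNIV). sum f \<sigma> \<in> {1}}"
      by (rule closedin_continuous_map_preimage[OF sum]) simp
    show "\<And>S. S \<in> range (\<lambda>v. {f \<in> topspace (powertop_real UNIV). f v \<in> (if v \<in> \<sigma> then {0..} else {0})})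
        \<Longrightarrow> closedin (powertop_real UNIV) S"
    proof clarify
      fix v
      show "closedin (powertop_real UNIV)
          {f \<in> topspace (powertop_real UNIV). f v \<in> (if v \<in> \<sigma> then {0..} else {0})}"
        by (rule closedin_continuous_map_preimage[OF coordinate]) simp
    qed
  qed simp
  finally show ?thesis .
qed

lemma openin_geometric_realization:
  "openin (geometric_realization K) U \<longleftrightarrow>
     U \<subseteq> realization_carrier K \<and>
     (\<forall>\<sigma>\<in>K. openin (simplex_topology \<sigma>) (U \<inter> closed_simplex \<sigma>))"
proof -
  let ?P = "\<lambda>U. U \<subseteq> realization_carrier K \<and>
     (\<forall>\<sigma>\<in>K. openin (simplex_topology \<sigma>) (U \<inter> closed_simplex \<sigma>))"
  have "?P (S \<inter> T)" if "?P S" "?P T" for S T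
  proof -
    have "S \<inter> T \<inter> closed_simplex \<sigma> = (S \<inter> closed_simplex \<sigma>) \<inter> (T \<inter> closed_simplex \<sigma>)" for \<sigma>
      by blast
    then show ?thesis using that by (auto intro: openin_Int)
  qed
  moreover have "?P (\<Union> \<U>)" if "\<forall>U\<in>\<U>. ?P U" for \<U>
  proof -
    have "\<Union> \<U> \<inter> closed_simplex \<sigma> = (\<Union>U\<in>\<U>. U \<inter> closed_simplex \<sigma>)" for \<sigma>
      by blast
    moreover have "openin (simplex_topology \<sigma>) (\<Union>U\<in>\<U>. U \<inter> closed_simplex \<sigma>)" if "\<sigma> \<in> K" for \<sigma>
      using that \<open>\<forall>U\<in>\<U>. ?P U\<close> by (intro openin_Union) auto
    ultimately show ?thesis using that by auto
  qed
  ultimately have "istopology ?P"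
    unfolding istopology_def by blast
  then show ?thesis
    unfolding geometric_realization_def by simp
qed

lemma topspace_geometric_realization:
  assumes "simplicial_complex K"
  shows "topspace (geometric_realization K) = realization_carrier K"
proof -
  have "openin (geometric_realization K) (realization_carrier K)"
    unfolding openin_geometric_realization
    using closed_simplex_subset_realization_carrier[OF assms]
    by (auto simp: inf.absorb2 openin_subtopology_refl)
  then show ?thesis
    using openin_subset openin_geometric_realization[of K "topspace (geometric_realization K)"]
    by blast
qed

lemma continuous_map_into_geometric_realization:
  assumes K: "simplicial_complex K" and "finite S"
    and cont: "continuous_map Z (powertop_real UNIV) \<phi>"
    and into: "\<And>z. z \<in> topspace Z \<Longrightarrow> \<phi> z \<in> realization_carrier K \<and> {v. \<phi> z v \<noteq> 0} \<subseteq> S"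
  shows "continuous_map Z (geometric_realization K) \<phi>"
  unfolding continuous_map_closedin
proof (intro conjI allI impI)
  show "\<phi> \<in> topspace Z \<rightarrow> topspace (geometric_realization K)"
    using into topspace_geometric_realization[OF K] by blast
  fix C assume C: "closedin (geometric_realization K) C"
  let ?T = "{\<rho>\<in>K. \<rho> \<subseteq> S}"
  have "finite ?T" using \<open>finite S\<close> by (rule rev_finite_subset[OF finite_Pow_iff[THEN iffD2]]) auto
  have C_simplex: "closedin (powertop_real UNIV) (C \<inter> closed_simplex \<rho>)" if "\<rho> \<in> K" for \<rho>
  proof -
    have "openin (geometric_realization K) (realization_carrier K - C)"
      using C by (simp add: closedin_def topspace_geometric_realization[OF K])
    then have "openin (simplex_topology \<rho>) ((realization_carrier K - C) \<inter> closed_simplex \<rho>)"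
      using that unfolding openin_geometric_realization by blast
    moreover have "(realization_carrier K - C) \<inter> closed_simplex \<rho> =
        topspace (simplex_topology \<rho>) - (C \<inter> closed_simplex \<rho>)"
      using closed_simplex_subset_realization_carrier[OF K that] by auto
    ultimately have "closedin (simplex_topology \<rho>) (C \<inter> closed_simplex \<rho>)"
      by (simp add: closedin_def)
    then show ?thesis
      using closedin_trans_full closedin_closed_simplex simplicial_complex_finite[OF K that] by blast
  qed
  have "{z \<in> topspace Z. \<phi> z \<in> C} = (\<Union>\<rho>\<in>?T. {z \<in> topspace Z. \<phi> z \<in> C \<inter> closed_simplex \<rho>})"
    using into realization_carrierD by fast
  also have "closedin Z \<dots>"
    using \<open>finite ?T\<close> closedin_continuous_map_preimage[OF cont C_simplex] by (intro closedin_Union) auto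
  finally show "closedin Z {z \<in> topspace Z. \<phi> z \<in> C}" .
qed

lemma continuous_map_from_geometric_realization:
  assumes K: "simplicial_complex K"
    and cont: "\<And>\<sigma>. \<sigma> \<in> K \<Longrightarrow> continuous_map (simplex_topology \<sigma>) Z \<phi>"
    and into: "\<And>x. x \<in> realization_carrier K \<Longrightarrow> \<phi> x \<in> topspace Z"
  shows "continuous_map (geometric_realization K) Z \<phi>"
  unfolding continuous_map_def
proof (intro conjI allI impI)
  show "\<phi> \<in> topspace (geometric_realization K) \<rightarrow> topspace Z"
    using into topspace_geometric_realization[OF K] by auto
  fix U assume U: "openin Z U"
  have "{x \<in> realization_carrier K. \<phi> x \<in> U} \<inter> closed_simplex \<sigma> =
      {x \<in> topspace (simplex_topology \<sigma>). \<phi> x \<in> U}" if "\<sigma> \<in> K" for \<sigma>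
    using closed_simplex_subset_realization_carrier[OF K that] by auto
  then show "openin (geometric_realization K) {x \<in> topspace (geometric_realization K). \<phi> x \<in> U}"
    unfolding openin_geometric_realization topspace_geometric_realization[OF K]
    using openin_continuous_map_preimage[OF cont U] by auto
qed

lemma openin_geometric_realization_slice:
  assumes K: "simplicial_complex K" and C: "compactin T C"
    and W: "\<And>\<sigma>. \<sigma> \<in> K \<Longrightarrow>
      openin (prod_topology T (simplex_topology \<sigma>)) (W \<inter> (topspace T \<times> closed_simplex \<sigma>))"
  shows "openin (geometric_realization K) {p \<in> realization_carrier K. C \<times> {p} \<subseteq> W}"
    (is "openin _ ?V")
  unfolding openin_geometric_realization
proof (intro conjI ballI)
  show "?V \<subseteq> realization_carrier K" by blast
  fix \<sigma> assume \<sigma>: "\<sigma> \<in> K"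
  have "\<exists>N. openin (simplex_topology \<sigma>) N \<and> p \<in> N \<and> N \<subseteq> ?V \<inter> closed_simplex \<sigma>"
    if p: "p \<in> ?V \<inter> closed_simplex \<sigma>" for p
  proof -
    have slice: "C \<times> {p} \<subseteq> W \<inter> (topspace T \<times> closed_simplex \<sigma>)"
      using p compactin_subset_topspace[OF C] by blast
    have "p \<in> topspace (simplex_topology \<sigma>)"
      using p by simp
    from tube_lemma_left[OF W[OF \<sigma>] C this slice]
    obtain U N where N: "openin (simplex_topology \<sigma>) N" "p \<in> N"
      and "C \<subseteq> U" "U \<times> N \<subseteq> W \<inter> (topspace T \<times> closed_simplex \<sigma>)"
      by blast
    then have "C \<times> N \<subseteq> W" "N \<subseteq> closed_simplex \<sigma>"
      using openin_subset[OF N(1)] by auto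
    then have "N \<subseteq> ?V \<inter> closed_simplex \<sigma>"
      using closed_simplex_subset_realization_carrier[OF K \<sigma>] by blast
    then show ?thesis
      using N by blast
  qed
  then show "openin (simplex_topology \<sigma>) (?V \<inter> closed_simplex \<sigma>)"
    by (subst openin_subopen) blast
qed

(* Products with a locally compact T are coherent with the products of T with closed simplices:
   a compact neighbourhood C of t and the tube lemma, simplex by simplex, give an open slice. *)
lemma openin_prod_geometric_realization:
  assumes K: "simplicial_complex K" and T: "neighbourhood_base_of (compactin T) T"
    and W_sub: "W \<subseteq> topspace T \<times> realization_carrier K"
    and W: "\<And>\<sigma>. \<sigma> \<in> K \<Longrightarrow>
      openin (prod_topology T (simplex_topology \<sigma>)) (W \<inter> (topspace T \<times> closed_simplex \<sigma>))"
  shows "openin (prod_topology T (geometric_realization K)) W"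
  unfolding openin_prod_topology_alt
proof (intro allI impI)
  fix t p assume tp: "(t, p) \<in> W"
  let ?\<sigma> = "{v. p v \<noteq> 0}"
  have p: "p \<in> realization_carrier K"
    using tp W_sub by blast
  then have \<sigma>: "?\<sigma> \<in> K" and "p \<in> closed_simplex ?\<sigma>"
    by (rule realization_carrierD)+
  then have "(t, p) \<in> W \<inter> (topspace T \<times> closed_simplex ?\<sigma>)"
    using tp W_sub by blast
  from openin_prod_topology_alt[THEN iffD1, OF W[OF \<sigma>], rule_format, OF this]
  obtain U0 N0 where U0: "openin T U0" "t \<in> U0" and "p \<in> N0"
    and U0N0: "U0 \<times> N0 \<subseteq> W \<inter> (topspace T \<times> closed_simplex ?\<sigma>)"
    by blast
  from T[unfolded neighbourhood_base_of, rule_format, OF conjI[OF U0]]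
  obtain U C where U: "openin T U" "t \<in> U" and C: "compactin T C" and "U \<subseteq> C" "C \<subseteq> U0"
    by blast
  let ?V = "{q \<in> realization_carrier K. C \<times> {q} \<subseteq> W}"
  have "openin (geometric_realization K) ?V"
    by (rule openin_geometric_realization_slice[OF K C W])
  moreover have "C \<times> {p} \<subseteq> W"
    using U0N0 \<open>p \<in> N0\<close> \<open>C \<subseteq> U0\<close> by blast
  then have "p \<in> ?V"
    using p by blast
  moreover have "U \<times> ?V \<subseteq> W"
    using \<open>U \<subseteq> C\<close> by blast
  ultimately show "\<exists>U V. openin T U \<and> openin (geometric_realization K) V \<and>
      t \<in> U \<and> p \<in> V \<and> U \<times> V \<subseteq> W"
    using U by blast
qed

lemma continuous_map_from_prod_geometric_realization:
  assumes K: "simplicial_complex K" and T: "neighbourhood_base_of (compactin T) T"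
    and cont: "\<And>\<sigma>. \<sigma> \<in> K \<Longrightarrow> continuous_map (prod_topology T (simplex_topology \<sigma>)) Z \<phi>"
    and into: "\<And>t x. t \<in> topspace T \<Longrightarrow> x \<in> realization_carrier K \<Longrightarrow> \<phi> (t, x) \<in> topspace Z"
  shows "continuous_map (prod_topology T (geometric_realization K)) Z \<phi>"
  unfolding continuous_map_def topspace_prod_topology topspace_geometric_realization[OF K]
proof (intro conjI allI impI)
  show "\<phi> \<in> topspace T \<times> realization_carrier K \<rightarrow> topspace Z"
    using into by blast
  fix U assume U: "openin Z U"
  show "openin (prod_topology T (geometric_realization K))
      {x \<in> topspace T \<times> realization_carrier K. \<phi> x \<in> U}"
  proof (rule openin_prod_geometric_realization[OF K T])
    fix \<sigma> assume \<sigma>: "\<sigma> \<in> K"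
    have "{x \<in> topspace T \<times> realization_carrier K. \<phi> x \<in> U} \<inter> (topspace T \<times> closed_simplex \<sigma>) =
        {x \<in> topspace (prod_topology T (simplex_topology \<sigma>)). \<phi> x \<in> U}"
      using closed_simplex_subset_realization_carrier[OF K \<sigma>] by auto
    then show "openin (prod_topology T (simplex_topology \<sigma>))
        ({x \<in> topspace T \<times> realization_carrier K. \<phi> x \<in> U} \<inter> (topspace T \<times> closed_simplex \<sigma>))"
      using openin_continuous_map_preimage[OF cont[OF \<sigma>] U] by simp
  qed blast
qed

lemma continuous_map_subcomplex_inclusion:
  assumes K: "simplicial_complex K" and L: "simplicial_complex L" and "L \<subseteq> K"
  shows "continuous_map (geometric_realization L) (geometric_realization K) id"
proof (rule continuous_map_from_geometric_realization[OF L])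
  fix \<sigma> assume "\<sigma> \<in> L"
  show "continuous_map (simplex_topology \<sigma>) (geometric_realization K) id"
  proof (rule continuous_map_into_geometric_realization[OF K])
    show "continuous_map (simplex_topology \<sigma>) (powertop_real UNIV) id"
      by (rule continuous_map_from_subtopology[OF continuous_map_id])
    show "finite \<sigma>" using simplicial_complex_finite[OF L \<open>\<sigma> \<in> L\<close>] .
    fix z assume "z \<in> topspace (simplex_topology \<sigma>)"
    then have "z \<in> closed_simplex \<sigma>" by simp
    moreover have "closed_simplex \<sigma> \<subseteq> realization_carrier K"
      using closed_simplex_subset_realization_carrier[OF K] \<open>\<sigma> \<in> L\<close> assms(3) by blast
    ultimately show "id z \<in> realization_carrier K \<and> {v. id z v \<noteq> 0} \<subseteq> \<sigma>"
      using closed_simplexD(4) by auto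
  qed
qed (use realization_carrier_mono[OF assms(3)] topspace_geometric_realization[OF K] in auto)

lemma neighbourhood_base_compactin_unit_interval:
  "neighbourhood_base_of (compactin (top_of_set {0..1::real})) (top_of_set {0..1::real})"
proof -
  have "locally_compact_space (top_of_set {0..1::real})"
    by (rule compact_imp_locally_compact_space) (simp add: compact_space_subtopology)
  then show ?thesis
    by (metis Hausdorff_space_euclidean Hausdorff_space_subtopology
        locally_compact_space_neighbourhood_base)
qed

section \<open>Deformation retractions\<close>

lemma homotopic_with_retract_reflect:
  assumes r: "continuous_map B A r" and ri: "\<And>x. x \<in> topspace A \<Longrightarrow> r (i x) = x"
    and h1: "continuous_map S A h1" "h1 b = x" and h2: "continuous_map S A h2" "h2 b = x"
    and x: "x \<in> topspace A"
    and hom: "homotopic_with (\<lambda>k. k b = i x) S B (i \<circ> h1) (i \<circ> h2)"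
  shows "homotopic_with (\<lambda>k. k b = x) S A h1 h2"
proof -
  have hom_r: "homotopic_with (\<lambda>k. k b = x) S A (r \<circ> (i \<circ> h1)) (r \<circ> (i \<circ> h2))"
  proof (rule homotopic_with_compose_continuous_map_left[OF hom r])
    fix j assume "j b = i x"
    then show "(r \<circ> j) b = x" using ri x by simp
  qed
  have retract: "homotopic_with (\<lambda>k. k b = x) S A h (r \<circ> (i \<circ> h))"
    if "continuous_map S A h" "h b = x" for h
    using that ri continuous_map_image_subset_topspace[OF that(1)]
    by (intro homotopic_with_equal) (auto simp: x image_subset_iff)
  show ?thesis
    using homotopic_with_trans[OF homotopic_with_trans[OF retract[OF h1] hom_r]
        homotopic_with_symD[OF retract[OF h2]]] .
qed

lemma homotopic_with_deformation_retract_lift: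
  assumes r: "continuous_map B A r" and ri: "\<And>x. x \<in> topspace A \<Longrightarrow> r (i x) = x"
    and hom: "homotopic_with (\<lambda>h. \<forall>x\<in>topspace A. h (i x) = i x) B B id (i \<circ> r)"
    and g: "continuous_map S B g" "g b = i x" and x: "x \<in> topspace A"
  shows "continuous_map S A (r \<circ> g) \<and> (r \<circ> g) b = x \<and>
    homotopic_with (\<lambda>k. k b = i x) S B (i \<circ> (r \<circ> g)) g"
proof (intro conjI)
  show "continuous_map S A (r \<circ> g)" using g r by (blast intro: continuous_map_compose)
  show "(r \<circ> g) b = x" using g ri x by simp
  have "homotopic_with (\<lambda>k. k b = i x) S B (id \<circ> g) (i \<circ> r \<circ> g)"
    using g x by (intro homotopic_with_compose_continuous_map_right[OF hom]) auto
  then show "homotopic_with (\<lambda>k. k b = i x) S B (i \<circ> (r \<circ> g)) g"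
    by (simp add: homotopic_with_sym o_assoc)
qed

lemma weak_homotopy_equivalence_deformation_retract:
  assumes i: "continuous_map A B i" and r: "continuous_map B A r"
    and ri: "\<And>x. x \<in> topspace A \<Longrightarrow> r (i x) = x"
    and hom: "homotopic_with (\<lambda>h. \<forall>x\<in>topspace A. h (i x) = i x) B B id (i \<circ> r)"
  shows "weak_homotopy_equivalence A B i"
  unfolding weak_homotopy_equivalence_def
proof (intro conjI ballI allI impI)
  show "continuous_map A B i" by (fact i)
next
  fix y assume y: "y \<in> topspace B"
  have "homotopic_with (\<lambda>_. True) euclideanreal B (id \<circ> (\<lambda>_. y)) (i \<circ> r \<circ> (\<lambda>_. y))"
    using y by (intro homotopic_with_compose_continuous_map_right[OF hom]) auto
  then have "path_component_of B y (i (r y))"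
    by (simp add: o_def homotopic_constant_maps)
  then show "\<exists>x\<in>topspace A. path_component_of B (i x) y"
    using r y by (metis continuous_map_image_subset_topspace image_subset_iff path_component_of_sym)
next
  fix x1 x2 assume "x1 \<in> topspace A" "x2 \<in> topspace A" and "path_component_of B (i x1) (i x2)"
  then obtain g where g: "pathin B g" "g 0 = i x1" "g 1 = i x2"
    unfolding path_component_of_def by blast
  have "pathin A (r \<circ> g)"
    using pathin_compose[OF g(1) r] .
  then show "path_component_of A x1 x2"
    unfolding path_component_of_def using g ri \<open>x1 \<in> topspace A\<close> \<open>x2 \<in> topspace A\<close>
    by (intro exI[of _ "r \<circ> g"]) auto
next
  fix n :: nat and x assume x: "x \<in> topspace A"
  show "\<exists>h. continuous_map (nsphere n) A h \<and> h sphere_base = x \<and>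
      homotopic_with (\<lambda>k. k sphere_base = i x) (nsphere n) B (i \<circ> h) g"
    if "continuous_map (nsphere n) B g \<and> g sphere_base = i x" for g
    using that by (intro exI[of _ "r \<circ> g"] homotopic_with_deformation_retract_lift[OF r ri hom _ _ x])
      auto
  show "homotopic_with (\<lambda>k. k sphere_base = x) (nsphere n) A h1 h2"
    if "continuous_map (nsphere n) A h1 \<and> h1 sphere_base = x \<and>
      continuous_map (nsphere n) A h2 \<and> h2 sphere_base = x \<and>
      homotopic_with (\<lambda>k. k sphere_base = i x) (nsphere n) B (i \<circ> h1) (i \<circ> h2)" for h1 h2
    by (rule homotopic_with_retract_reflect[OF r ri _ _ _ _ x]) (use that in auto)
qed

section \<open>Barycentric mass\<close>

(* Where M vanishes so does a, and |a * (q / M)| <= |a| everywhere (with x / 0 = 0). *)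
lemma continuous_map_mult_divide:
  assumes a: "continuous_map Z euclideanreal a" and q: "continuous_map Z euclideanreal q"
    and M: "continuous_map Z euclideanreal M"
    and bound: "\<And>z. z \<in> topspace Z \<Longrightarrow> \<bar>a z\<bar> \<le> M z \<and> \<bar>q z\<bar> \<le> M z"
  shows "continuous_map Z euclideanreal (\<lambda>z. a z * (q z / M z))"
  unfolding continuous_map_atin limitin_canonical_iff
proof
  fix z0 assume z0: "z0 \<in> topspace Z"
  have lim: "(g \<longlongrightarrow> g z0) (atin Z z0)" if "continuous_map Z euclideanreal g" for g
    using that z0 unfolding continuous_map_atin by auto
  show "((\<lambda>z. a z * (q z / M z)) \<longlongrightarrow> a z0 * (q z0 / M z0)) (atin Z z0)"
  proof (cases "M z0 = 0")
    case False
    then show ?thesis by (intro tendsto_intros lim a q M)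
  next
    case True
    have "\<bar>a z * (q z / M z)\<bar> \<le> \<bar>a z\<bar> * 1" if "z \<in> topspace Z" for z
    proof (cases "M z = 0")
      case False
      have "0 \<le> M z"
        using bound[OF that] abs_ge_zero order_trans by blast
      then have "\<bar>q z / M z\<bar> \<le> 1"
        using bound[OF that] False by (simp add: abs_divide divide_le_eq_1)
      then have "\<bar>a z\<bar> * \<bar>q z / M z\<bar> \<le> \<bar>a z\<bar>"
        by (rule mult_left_le) simp
      then show ?thesis
        by (simp only: abs_mult mult_1_right)
    qed simp
    then have "eventually (\<lambda>z. norm (a z * (q z / M z)) \<le> norm (a z) * 1) (atin Z z0)"
      unfolding eventually_atin by auto
    moreover have "(a \<longlongrightarrow> 0) (atin Z z0)"
      using lim[OF a] bound[OF z0] True by simp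
    ultimately have "((\<lambda>z. a z * (q z / M z)) \<longlongrightarrow> 0) (atin Z z0)"
      by (rule tendsto_0_le[rotated])
    then show ?thesis
      using True by simp
  qed
qed

definition mass :: "('a \<Rightarrow> real) \<Rightarrow> 'a set \<Rightarrow> real" where
  "mass f A = sum f ({v. f v \<noteq> 0} \<inter> A)"

lemma mass_closed_simplex:
  assumes "f \<in> closed_simplex \<sigma>" "finite \<sigma>"
  shows "mass f A = sum f (\<sigma> \<inter> A)"
  unfolding mass_def
  by (rule sum.mono_neutral_left) (use assms closed_simplexD(4)[OF assms(1)] in auto)

lemma mass_nonneg: "f \<in> closed_simplex \<sigma> \<Longrightarrow> 0 \<le> mass f A"
  unfolding mass_def by (intro sum_nonneg) (simp add: closed_simplexD(1))

lemma mass_ge: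
  assumes f: "f \<in> closed_simplex \<sigma>" and "finite \<sigma>" "v \<in> A"
  shows "f v \<le> mass f A"
proof (cases "f v = 0")
  case False
  have "finite ({v. f v \<noteq> 0} \<inter> A)"
    using closed_simplexD(4)[OF f] \<open>finite \<sigma>\<close> by (meson finite_Int finite_subset)
  then show ?thesis
    unfolding mass_def using False \<open>v \<in> A\<close> closed_simplexD(1)[OF f]
    by (intro member_le_sum) auto
qed (simp add: mass_nonneg[OF f])

lemma mass_eq_0D:
  "f \<in> closed_simplex \<sigma> \<Longrightarrow> finite \<sigma> \<Longrightarrow> mass f A = 0 \<Longrightarrow> v \<in> A \<Longrightarrow> f v = 0"
  using mass_ge closed_simplexD(1) by (metis order_antisym)

lemma mass_disjoint: "{v. f v \<noteq> 0} \<inter> A = {} \<Longrightarrow> mass f A = 0"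
  unfolding mass_def by simp

lemma mass_nonzero_Int:
  assumes "f \<in> closed_simplex \<sigma>" "mass f A \<noteq> 0"
  shows "\<sigma> \<inter> A \<noteq> {}"
proof
  assume "\<sigma> \<inter> A = {}"
  then have "{v. f v \<noteq> 0} \<inter> A = {}"
    using closed_simplexD(4)[OF assms(1)] by blast
  then show False
    using assms(2) by (simp add: mass_disjoint)
qed

lemma continuous_map_mass:
  assumes "finite \<sigma>"
  shows "continuous_map (simplex_topology \<sigma>) euclideanreal (\<lambda>f. mass f A)"
proof (rule continuous_map_eq)
  show "continuous_map (simplex_topology \<sigma>) euclideanreal (\<lambda>f. \<Sum>v\<in>\<sigma> \<inter> A. f v)"
    using assms by (intro continuous_map_sum continuous_map_coordinate) auto
qed (simp add: mass_closed_simplex[OF _ assms])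

(* When mass f A = 0 the factor is 0 by x / 0 = 0; f vanishes on A in that case anyway. *)
definition proportional_part :: "('a \<Rightarrow> real) \<Rightarrow> 'a set \<Rightarrow> real \<Rightarrow> 'a \<Rightarrow> real" where
  "proportional_part f A c v = (if v \<in> A then f v * (c / mass f A) else 0)"

lemma proportional_part_zero [simp]: "proportional_part f A 0 v = 0"
  by (simp add: proportional_part_def)

lemma proportional_part_outside [simp]: "v \<notin> A \<Longrightarrow> proportional_part f A c v = 0"
  by (simp add: proportional_part_def)

lemma sum_proportional_part:
  assumes f: "f \<in> closed_simplex \<sigma>" "finite \<sigma>" and c: "mass f A = 0 \<Longrightarrow> c = 0"
  shows "sum (proportional_part f A c) \<sigma> = c"
proof -
  have "sum (proportional_part f A c) \<sigma> = sum (\<lambda>v. f v * (c / mass f A)) (\<sigma> \<inter> A)"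
    unfolding proportional_part_def by (simp add: sum.inter_restrict[OF f(2)] del: times_divide_eq_right)
  also have "\<dots> = mass f A * (c / mass f A)"
    by (simp only: sum_distrib_right[symmetric] mass_closed_simplex[OF f])
  also have "\<dots> = c"
    using c by (cases "mass f A = 0") auto
  finally show ?thesis .
qed

lemma proportional_part_bounds:
  assumes f: "f \<in> closed_simplex \<sigma>" and "0 \<le> c" "c \<le> mass f A"
  shows "0 \<le> proportional_part f A c v" and "proportional_part f A c v \<le> f v"
proof -
  have "0 \<le> c / mass f A" "c / mass f A \<le> 1"
    using assms by (auto simp: divide_le_eq_1)
  then show "0 \<le> proportional_part f A c v" "proportional_part f A c v \<le> f v"
    unfolding proportional_part_def using closed_simplexD(1)[OF f, of v]
    by (auto simp: mult_left_le simp del: times_divide_eq_right)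
qed

lemma proportional_part_mass:
  assumes "f \<in> closed_simplex \<sigma>" "finite \<sigma>" "v \<in> A"
  shows "proportional_part f A (mass f A) v = f v"
  using assms mass_eq_0D[OF assms(1,2)] unfolding proportional_part_def
  by (cases "mass f A = 0") auto

lemma continuous_map_proportional_part:
  assumes "finite \<sigma>" and c: "continuous_map (simplex_topology \<sigma>) euclideanreal c"
    and c_bounds: "\<And>f. f \<in> closed_simplex \<sigma> \<Longrightarrow> 0 \<le> c f \<and> c f \<le> mass f A"
  shows "continuous_map (simplex_topology \<sigma>) euclideanreal (\<lambda>f. proportional_part f A (c f) v)"
proof (cases "v \<in> A")
  case True
  have "continuous_map (simplex_topology \<sigma>) euclideanreal (\<lambda>f. f v * (c f / mass f A))"
    using c_bounds mass_ge[OF _ \<open>finite \<sigma>\<close> True] closed_simplexD(1)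
    by (intro continuous_map_mult_divide continuous_map_coordinate c continuous_map_mass assms)
      fastforce
  then show ?thesis
    using True by (simp add: proportional_part_def)
qed simp

section \<open>The retraction onto the union of the full subcomplexes\<close>

locale apex_cover =
  fixes K :: "'a set set" and X Y :: "'a set" and aX aY :: 'a
  assumes simplicial: "simplicial_complex K"
    and cover: "vertices K \<subseteq> X \<union> Y"
    and apexes: "aX \<in> X \<inter> Y" "aY \<in> X \<inter> Y"
    and apex_closed:
      "\<And>\<sigma>. \<sigma> \<in> K \<Longrightarrow> \<sigma> \<inter> (X - Y) \<noteq> {} \<Longrightarrow> \<sigma> \<inter> (Y - X) \<noteq> {} \<Longrightarrow> \<sigma> \<union> {aX, aY} \<in> K"
begin

lemma simplex_subset_cover: "\<sigma> \<in> K \<Longrightarrow> \<sigma> \<subseteq> X \<union> Y"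
  using simplex_subset_vertices[OF simplicial] cover by blast

lemma simplicial_complex_full_sub_Un: "simplicial_complex (full_sub K X \<union> full_sub K Y)"
  using simplicial simplicial_complex_full_sub simplicial_complex_Un by blast

lemma central_simplex_apexes:
  assumes \<sigma>: "\<sigma> \<in> K" and "\<not> \<sigma> \<subseteq> X" "\<not> \<sigma> \<subseteq> Y"
  shows "central_simplex (St K \<sigma> (X \<inter> Y)) {aX, aY}"
proof -
  have XY: "\<sigma> \<inter> (X - Y) \<noteq> {}" "\<sigma> \<inter> (Y - X) \<noteq> {}"
    using assms simplex_subset_cover[OF \<sigma>] by blast+
  have "{aX, aY} \<union> \<sigma> \<in> K"
    using apex_closed[OF \<sigma> XY] by (simp add: Un_commute)
  moreover have "(\<mu> \<union> {aX, aY}) \<union> \<sigma> \<in> K" if "\<mu> \<union> \<sigma> \<in> K" for \<mu>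
  proof -
    have "(\<mu> \<union> \<sigma>) \<inter> (X - Y) \<noteq> {}" "(\<mu> \<union> \<sigma>) \<inter> (Y - X) \<noteq> {}"
      using XY by blast+
    from apex_closed[OF that this] show ?thesis
      by (simp add: Un_ac)
  qed
  ultimately show ?thesis
    using apexes unfolding central_simplex_def St_def by auto
qed

definition apex_weight :: "('a \<Rightarrow> real) \<Rightarrow> real" where
  "apex_weight f = min (mass f (X - Y)) (mass f (Y - X))"

definition retraction :: "('a \<Rightarrow> real) \<Rightarrow> 'a \<Rightarrow> real" where
  "retraction f v = f v - proportional_part f (X - Y) (apex_weight f) v
     - proportional_part f (Y - X) (apex_weight f) v
     + (if v = aX then apex_weight f else 0) + (if v = aY then apex_weight f else 0)"

definition deformation :: "real \<Rightarrow> ('a \<Rightarrow> real) \<Rightarrow> 'a \<Rightarrow> real" where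
  "deformation t f v = f v + t * (retraction f v - f v)"

lemma apex_weight_bounds:
  assumes "f \<in> closed_simplex \<sigma>"
  shows "0 \<le> apex_weight f" "apex_weight f \<le> mass f (X - Y)" "apex_weight f \<le> mass f (Y - X)"
  using mass_nonneg[OF assms] unfolding apex_weight_def by auto

lemma retraction_eq_self: "apex_weight f = 0 \<Longrightarrow> retraction f = f"
  by (simp add: retraction_def fun_eq_iff)

lemma retraction_closed_simplex:
  assumes f: "f \<in> closed_simplex \<sigma>" and "finite \<sigma>"
  shows "retraction f \<in> closed_simplex (\<sigma> \<union> {aX, aY})"
proof -
  let ?\<tau> = "\<sigma> \<union> {aX, aY}" and ?m = "apex_weight f"
  have "finite ?\<tau>"
    using \<open>finite \<sigma>\<close> by simp
  have f\<tau>: "f \<in> closed_simplex ?\<tau>"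
    by (rule closed_simplex_mono[OF f Un_upper1 \<open>finite ?\<tau>\<close>])
  note bounds = apex_weight_bounds[OF f]
  have nonneg: "0 \<le> retraction f v" for v
  proof -
    consider "v \<in> X - Y" | "v \<in> Y - X" | "v \<notin> X - Y" "v \<notin> Y - X"
      by blast
    then show ?thesis
    proof cases
      case 1
      then show ?thesis
        using proportional_part_bounds(2)[OF f bounds(1,2), of v] apexes
        unfolding retraction_def by auto
    next
      case 2
      then show ?thesis
        using proportional_part_bounds(2)[OF f bounds(1,3), of v] apexes
        unfolding retraction_def by auto
    qed (use closed_simplexD(1)[OF f] bounds(1) in \<open>simp add: retraction_def\<close>)
  qed
  have "retraction f v = 0" if "v \<notin> ?\<tau>" for v
    using that closed_simplexD(2)[OF f, of v]
    unfolding retraction_def proportional_part_def by simp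
  moreover have "sum (retraction f) ?\<tau> = 1"
  proof -
    have "sum (retraction f) ?\<tau> = sum f ?\<tau>
        - sum (proportional_part f (X - Y) ?m) ?\<tau> - sum (proportional_part f (Y - X) ?m) ?\<tau>
        + ?m + ?m"
      unfolding retraction_def using \<open>finite ?\<tau>\<close>
      by (simp add: sum.distrib sum_subtractf sum.delta)
    also have "\<dots> = 1"
      using closed_simplexD(3)[OF f\<tau>] bounds
        sum_proportional_part[OF f\<tau> \<open>finite ?\<tau>\<close>, of "X - Y" ?m]
        sum_proportional_part[OF f\<tau> \<open>finite ?\<tau>\<close>, of "Y - X" ?m]
      by simp
    finally show ?thesis .
  qed
  ultimately show ?thesis
    using nonneg unfolding closed_simplex_def by blast
qed

lemma retraction_vanishes:
  assumes f: "f \<in> closed_simplex \<sigma>" and "finite \<sigma>"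
  shows "(\<forall>v\<in>X - Y. retraction f v = 0) \<or> (\<forall>v\<in>Y - X. retraction f v = 0)"
proof (cases "mass f (X - Y) \<le> mass f (Y - X)")
  case True
  then have "apex_weight f = mass f (X - Y)"
    unfolding apex_weight_def by simp
  then have "retraction f v = 0" if "v \<in> X - Y" for v
    using that apexes proportional_part_mass[OF assms that]
    unfolding retraction_def by auto
  then show ?thesis by blast
next
  case False
  then have "apex_weight f = mass f (Y - X)"
    unfolding apex_weight_def by simp
  then have "retraction f v = 0" if "v \<in> Y - X" for v
    using that apexes proportional_part_mass[OF assms that]
    unfolding retraction_def by auto
  then show ?thesis by blast
qed

lemma realization_carrier_full_sub_Un:
  assumes g: "g \<in> realization_carrier K"
    and vanishes: "(\<forall>v\<in>X - Y. g v = 0) \<or> (\<forall>v\<in>Y - X. g v = 0)"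
  shows "g \<in> realization_carrier (full_sub K X \<union> full_sub K Y)"
proof -
  have "{v. g v \<noteq> 0} \<in> K"
    using realization_carrierD(1)[OF g] .
  moreover from this have "{v. g v \<noteq> 0} \<subseteq> Y \<or> {v. g v \<noteq> 0} \<subseteq> X"
    using simplex_subset_cover vanishes by blast
  ultimately show ?thesis
    using g unfolding realization_carrier_def full_sub_def by auto
qed

lemma Un_apexes_in_complex:
  assumes "\<sigma> \<in> K" "f \<in> closed_simplex \<sigma>" "apex_weight f \<noteq> 0"
  shows "\<sigma> \<union> {aX, aY} \<in> K"
proof (rule apex_closed[OF assms(1)])
  have "mass f (X - Y) \<noteq> 0" "mass f (Y - X) \<noteq> 0"
    using assms(3) apex_weight_bounds[OF assms(2)] unfolding apex_weight_def by linarith+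
  then show "\<sigma> \<inter> (X - Y) \<noteq> {}" "\<sigma> \<inter> (Y - X) \<noteq> {}"
    using mass_nonzero_Int[OF assms(2)] by blast+
qed

lemma retraction_in_subcomplex:
  assumes f: "f \<in> realization_carrier K"
  shows "retraction f \<in> realization_carrier (full_sub K X \<union> full_sub K Y)"
proof -
  let ?\<sigma> = "{v. f v \<noteq> 0}"
  have \<sigma>: "?\<sigma> \<in> K" "f \<in> closed_simplex ?\<sigma>" "finite ?\<sigma>"
    using realization_carrierD[OF f] simplicial_complex_finite[OF simplicial] by blast+
  have "retraction f \<in> realization_carrier K"
  proof (cases "apex_weight f = 0")
    case False
    then show ?thesis
      using retraction_closed_simplex[OF \<sigma>(2,3)] Un_apexes_in_complex[OF \<sigma>(1,2)]
        closed_simplex_subset_realization_carrier[OF simplicial] by blast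
  qed (simp add: retraction_eq_self f)
  then show ?thesis
    using realization_carrier_full_sub_Un retraction_vanishes[OF \<sigma>(2,3)] by blast
qed

lemma retraction_fixes:
  assumes f: "f \<in> realization_carrier (full_sub K X \<union> full_sub K Y)"
  shows "retraction f = f"
proof (rule retraction_eq_self)
  have "f \<in> closed_simplex {v. f v \<noteq> 0}"
    using realization_carrierD(2)[OF f] .
  moreover have "{v. f v \<noteq> 0} \<subseteq> X \<or> {v. f v \<noteq> 0} \<subseteq> Y"
    using realization_carrierD(1)[OF f] unfolding full_sub_def by blast
  then have "{v. f v \<noteq> 0} \<inter> (Y - X) = {} \<or> {v. f v \<noteq> 0} \<inter> (X - Y) = {}"
    by blast
  then have "mass f (Y - X) = 0 \<or> mass f (X - Y) = 0"
    by (elim disjE) (simp_all add: mass_disjoint)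
  ultimately show "apex_weight f = 0"
    using mass_nonneg[OF \<open>f \<in> closed_simplex {v. f v \<noteq> 0}\<close>, of "X - Y"]
      mass_nonneg[OF \<open>f \<in> closed_simplex {v. f v \<noteq> 0}\<close>, of "Y - X"]
    unfolding apex_weight_def by linarith
qed

lemma deformation_0 [simp]: "deformation 0 f = f"
  and deformation_1 [simp]: "deformation 1 f = retraction f"
  by (simp_all add: deformation_def fun_eq_iff)

lemma deformation_in_complex:
  assumes \<sigma>: "\<sigma> \<in> K" and f: "f \<in> closed_simplex \<sigma>" and t: "t \<in> {0..1}"
  shows "deformation t f \<in> realization_carrier K"
    and "deformation t f \<in> closed_simplex (\<sigma> \<union> {aX, aY})"
proof -
  have "finite \<sigma>"
    using simplicial_complex_finite[OF simplicial \<sigma>] .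
  then have "f \<in> closed_simplex (\<sigma> \<union> {aX, aY})"
    using closed_simplex_mono[OF f Un_upper1, of "{aX, aY}"] by simp
  then show in_\<tau>: "deformation t f \<in> closed_simplex (\<sigma> \<union> {aX, aY})"
    unfolding deformation_def[abs_def]
    by (rule closed_simplex_convex[OF _ retraction_closed_simplex[OF f \<open>finite \<sigma>\<close>] t])
  show "deformation t f \<in> realization_carrier K"
  proof (cases "apex_weight f = 0")
    case True
    then show ?thesis
      using retraction_eq_self f closed_simplex_subset_realization_carrier[OF simplicial \<sigma>]
      by (auto simp: deformation_def[abs_def])
  next
    case False
    then show ?thesis
      using in_\<tau> Un_apexes_in_complex[OF \<sigma> f] closed_simplex_subset_realization_carrier[OF simplicial]
      by blast
  qed
qed

lemma continuous_map_apex_weight: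
  "finite \<sigma> \<Longrightarrow> continuous_map (simplex_topology \<sigma>) euclideanreal apex_weight"
  unfolding apex_weight_def[abs_def] by (intro continuous_map_real_min continuous_map_mass)

lemma continuous_map_retraction:
  assumes "finite \<sigma>"
  shows "continuous_map (simplex_topology \<sigma>) (powertop_real UNIV) retraction"
  unfolding continuous_map_componentwise_UNIV
proof
  fix v :: 'a
  have weight: "continuous_map (simplex_topology \<sigma>) euclideanreal apex_weight"
    using continuous_map_apex_weight[OF assms] .
  have apex_term: "continuous_map (simplex_topology \<sigma>) euclideanreal
      (\<lambda>f. if v = a then apex_weight f else 0)" for a
    using weight by (cases "v = a") simp_all
  have part: "continuous_map (simplex_topology \<sigma>) euclideanreal
      (\<lambda>f. proportional_part f A (apex_weight f) v)" if "A = X - Y \<or> A = Y - X" for A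
    using that apex_weight_bounds
    by (intro continuous_map_proportional_part assms weight) auto
  show "continuous_map (simplex_topology \<sigma>) euclideanreal (\<lambda>f. retraction f v)"
    unfolding retraction_def
    by (intro continuous_map_add continuous_map_diff continuous_map_coordinate apex_term part) simp_all
qed

lemma continuous_map_deformation:
  assumes "finite \<sigma>"
  shows "continuous_map (prod_topology (top_of_set {0..1}) (simplex_topology \<sigma>))
      (powertop_real UNIV) (\<lambda>p. deformation (fst p) (snd p))"
  unfolding continuous_map_componentwise_UNIV
proof
  fix v :: 'a
  let ?T = "prod_topology (top_of_set {0..1::real}) (simplex_topology \<sigma>)"
  have "continuous_map ?T euclideanreal fst"
    using continuous_map_fst continuous_map_in_subtopology by blast
  moreover have "continuous_map ?T euclideanreal (\<lambda>p. snd p v)"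
    using continuous_map_compose[OF continuous_map_snd continuous_map_coordinate]
    by (simp add: o_def)
  moreover have "continuous_map ?T euclideanreal (\<lambda>p. retraction (snd p) v)"
    using continuous_map_compose[OF continuous_map_snd continuous_map_retraction[OF assms]]
      continuous_map_componentwise_UNIV by (fastforce simp: o_def)
  ultimately show "continuous_map ?T euclideanreal (\<lambda>p. deformation (fst p) (snd p) v)"
    unfolding deformation_def
    by (intro continuous_map_add continuous_map_real_mult continuous_map_diff)
qed

lemma finite_Un_apexes: "\<sigma> \<in> K \<Longrightarrow> finite (\<sigma> \<union> {aX, aY})"
  using simplicial_complex_finite[OF simplicial] by simp

lemma continuous_map_retraction_realization:
  "continuous_map (geometric_realization K)
     (geometric_realization (full_sub K X \<union> full_sub K Y)) retraction"
proof (rule continuous_map_from_geometric_realization[OF simplicial])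
  fix \<sigma> assume \<sigma>: "\<sigma> \<in> K"
  show "continuous_map (simplex_topology \<sigma>)
      (geometric_realization (full_sub K X \<union> full_sub K Y)) retraction"
  proof (rule continuous_map_into_geometric_realization[OF simplicial_complex_full_sub_Un finite_Un_apexes[OF \<sigma>]])
    show "continuous_map (simplex_topology \<sigma>) (powertop_real UNIV) retraction"
      using continuous_map_retraction simplicial_complex_finite[OF simplicial \<sigma>] by blast
    fix f assume "f \<in> topspace (simplex_topology \<sigma>)"
    then have f: "f \<in> closed_simplex \<sigma>" by simp
    then show "retraction f \<in> realization_carrier (full_sub K X \<union> full_sub K Y) \<and>
        {v. retraction f v \<noteq> 0} \<subseteq> \<sigma> \<union> {aX, aY}"
      using retraction_in_subcomplex closed_simplex_subset_realization_carrier[OF simplicial \<sigma>]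
        closed_simplexD(4)[OF retraction_closed_simplex]
        simplicial_complex_finite[OF simplicial \<sigma>] by blast
  qed
next
  fix f assume "f \<in> realization_carrier K"
  then show "retraction f \<in> topspace (geometric_realization (full_sub K X \<union> full_sub K Y))"
    using retraction_in_subcomplex topspace_geometric_realization[OF simplicial_complex_full_sub_Un]
    by simp
qed

lemma continuous_map_deformation_realization:
  "continuous_map (prod_topology (top_of_set {0..1}) (geometric_realization K))
     (geometric_realization K) (\<lambda>p. deformation (fst p) (snd p))"
proof (rule continuous_map_from_prod_geometric_realization[OF simplicial
      neighbourhood_base_compactin_unit_interval])
  fix \<sigma> assume \<sigma>: "\<sigma> \<in> K"
  show "continuous_map (prod_topology (top_of_set {0..1}) (simplex_topology \<sigma>))
      (geometric_realization K) (\<lambda>p. deformation (fst p) (snd p))"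
  proof (rule continuous_map_into_geometric_realization[OF simplicial finite_Un_apexes[OF \<sigma>]])
    show "continuous_map (prod_topology (top_of_set {0..1}) (simplex_topology \<sigma>))
        (powertop_real UNIV) (\<lambda>p. deformation (fst p) (snd p))"
      using continuous_map_deformation simplicial_complex_finite[OF simplicial \<sigma>] by blast
    fix p assume "p \<in> topspace (prod_topology (top_of_set {0..1::real}) (simplex_topology \<sigma>))"
    then have "fst p \<in> {0..1}" "snd p \<in> closed_simplex \<sigma>"
      by auto
    then show "deformation (fst p) (snd p) \<in> realization_carrier K \<and>
        {v. deformation (fst p) (snd p) v \<noteq> 0} \<subseteq> \<sigma> \<union> {aX, aY}"
      using deformation_in_complex[OF \<sigma>] closed_simplexD(4) by blast
  qed
next
  fix t f assume t: "t \<in> topspace (top_of_set {0..1::real})" and f: "f \<in> realization_carrier K"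
  have "deformation t f \<in> realization_carrier K"
    using deformation_in_complex(1)[OF realization_carrierD[OF f]] t by simp
  then show "deformation (fst (t, f)) (snd (t, f)) \<in> topspace (geometric_realization K)"
    by (simp add: topspace_geometric_realization[OF simplicial])
qed

lemma retraction_homotopic_id:
  "homotopic_with (\<lambda>h. \<forall>f\<in>topspace (geometric_realization (full_sub K X \<union> full_sub K Y)). h (id f) = id f)
     (geometric_realization K) (geometric_realization K) id (id \<circ> retraction)"
  unfolding homotopic_with_def
proof (intro exI conjI allI ballI)
  show "continuous_map (prod_topology (top_of_set {0..1}) (geometric_realization K))
      (geometric_realization K) (\<lambda>p. deformation (fst p) (snd p))"
    by (rule continuous_map_deformation_realization)
  fix t f
  assume "f \<in> topspace (geometric_realization (full_sub K X \<union> full_sub K Y))"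
  then have "retraction f = f"
    using retraction_fixes topspace_geometric_realization[OF simplicial_complex_full_sub_Un]
    by simp
  then show "deformation (fst (t, id f)) (snd (t, id f)) = id f"
    by (simp add: deformation_def fun_eq_iff)
qed simp_all

theorem weak_homotopy_equivalence_subcomplex:
  "weak_homotopy_equivalence (geometric_realization (full_sub K X \<union> full_sub K Y))
     (geometric_realization K) id"
proof (rule weak_homotopy_equivalence_deformation_retract)
  show "continuous_map (geometric_realization (full_sub K X \<union> full_sub K Y))
      (geometric_realization K) id"
    by (rule continuous_map_subcomplex_inclusion[OF simplicial simplicial_complex_full_sub_Un])
      (auto simp: full_sub_def)
  show "continuous_map (geometric_realization K)
      (geometric_realization (full_sub K X \<union> full_sub K Y)) retraction"
    by (rule continuous_map_retraction_realization)
  show "retraction (id f) = f"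
    if "f \<in> topspace (geometric_realization (full_sub K X \<union> full_sub K Y))" for f
    using that retraction_fixes topspace_geometric_realization[OF simplicial_complex_full_sub_Un]
    by simp
qed (rule retraction_homotopic_id)

end

theorem proposition9p6:
  fixes K :: "'a set set" and X Y :: "'a set" and aX aY :: 'a
  assumes "simplicial_complex K" and "clique_complex K"
    and "X \<union> Y = vertices K"
    and "aX \<in> X \<inter> Y" and "aY \<in> X \<inter> Y"
    and "\<And>\<tau>. \<tau> \<in> edges K \<Longrightarrow> card (\<tau> \<inter> (X \<inter> Y)) = 1 \<Longrightarrow>
            card (\<tau> \<inter> (X - (X \<inter> Y))) = 1 \<Longrightarrow> \<tau> \<union> {aX} \<in> K"
    and "\<And>\<tau>. \<tau> \<in> edges K \<Longrightarrow> card (\<tau> \<inter> (X \<inter> Y)) = 1 \<Longrightarrow>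
            card (\<tau> \<inter> (Y - (X \<inter> Y))) = 1 \<Longrightarrow> \<tau> \<union> {aY} \<in> K"
    and "\<And>\<tau>. \<tau> \<in> edges K - {\<sigma>\<in>K. \<sigma> \<subseteq> X \<or> \<sigma> \<subseteq> Y \<or> \<sigma> \<inter> (X \<inter> Y) \<noteq> {}} \<Longrightarrow>
            \<tau> \<union> {aX, aY} \<in> K"
  shows "(\<forall>\<sigma>\<in>K - {\<sigma>\<in>K. \<sigma> \<subseteq> X \<or> \<sigma> \<subseteq> Y \<or> \<sigma> \<inter> (X \<inter> Y) \<noteq> {}}.
            central_simplex (St K \<sigma> (X \<inter> Y)) {aX, aY})
         \<and> weak_homotopy_equivalence
             (geometric_realization (full_sub K X \<union> full_sub K Y))
             (geometric_realization K) id"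
proof -
  have edge: "{u, w} \<in> edges K" if "{u, w} \<in> K" "u \<noteq> w" for u w
    using that unfolding edges_def by simp
  have edge_X: "{u, x} \<union> {aX} \<in> K" if "u \<in> X \<inter> Y" "x \<in> X - Y" "{u, x} \<in> K" for u x
    using that by (intro assms(6) edge) (auto simp: Int_insert_left)
  have edge_Y: "{u, y} \<union> {aY} \<in> K" if "u \<in> X \<inter> Y" "y \<in> Y - X" "{u, y} \<in> K" for u y
    using that by (intro assms(7) edge) (auto simp: Int_insert_left)
  have edge_XY: "{x, y} \<union> {aX, aY} \<in> K" if "x \<in> X - Y" "y \<in> Y - X" "{x, y} \<in> K" for x y
    using that by (intro assms(8) DiffI edge) auto
  have "\<sigma> \<union> {aX, aY} \<in> K" if "\<sigma> \<in> K" "\<sigma> \<inter> (X - Y) \<noteq> {}" "\<sigma> \<inter> (Y - X) \<noteq> {}" for \<sigma>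
    using that clique_complex_Un_apexes[OF assms(1,2) _ edge_X edge_Y edge_XY] assms(3) by blast
  then interpret apex_cover K X Y aX aY
    using assms(1,3-5) by unfold_locales auto
  show ?thesis
    using central_simplex_apexes weak_homotopy_equivalence_subcomplex by blast
qed

end
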